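(* Let $r\ge0$ be an integer, $\beta_1,\dots,\beta_r\in\mathbb C$, and let $|G_\psi\rangle=\hat S(\zeta_\psi)|\alpha_\psi\rangle$ be a single-mode Gaussian state which has coherent rank $k$ (i.e. is a superposition of $k$ coherent states). Consider the single-mode state (of stellar rank $r$) $$|\psi\rangle=\frac{1}{\sqrt{\mathcal N}}\left[\prod_{i=1}^r \hat D(\beta_i)\hat a^\dagger\hat D^\dagger(\beta_i)\right]|G_\psi\rangle,$$ with $\mathcal N$ the normalization constant. Then $|\psi\rangle$ has approximate coherent rank at most $k(r+1)$.
   Context: Single-mode Fock basis $\{|n\rangle\}$, annihilation operator $\hat a=\sum_{n\ge1}\sqrt n|n-1\rangle\langle n|$ and creation operator $\hat a^\dagger$. Displacement operator $\hat D(\alpha)=e^{\alpha\hat a^\dagger-\bar\alpha\hat a}$; coherent state $|\alpha\rangle=\hat D(\alpha)|0\rangle=e^{-|\alpha|^2/2}\sum_n\frac{\alpha^n}{\sqrt{n!}}|n\rangle$. Squeeze operator $\hat S(\zeta)=\exp[\tfrac12(\bar\zeta\hat a^2-\zeta\hat a^{\dagger2})]$, $\zeta\in\mathbb C$. A state has coherent rank $k$ if it can be written as a superposition $\sum_{i=1}^k c_i|\alpha_i\rangle$ of $k$ coherent states. The approximate coherent rank of $|\psi\rangle$ is the smallest integer $k$ such that for every $\delta>0$ there is a state $|\tilde\psi\rangle$ of coherent rank $k$ with $|\langle\psi|\tilde\psi\rangle|^2>1-\delta$. *)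

theory Defs
  imports Complex_Main
begin

text \<open>Single-mode Fock space: a vector is its sequence of Fock coefficients
  (component n = coefficient of the number state n).\<close>

type_synonym fvec = "nat \<Rightarrow> complex"

definition inner_f :: "fvec \<Rightarrow> fvec \<Rightarrow> complex" where
  "inner_f f g = (\<Sum>n. cnj (f n) * g n)"

definition sq_norm_f :: "fvec \<Rightarrow> real" where
  "sq_norm_f f = (\<Sum>n. (cmod (f n))^2)"

definition ann :: "fvec \<Rightarrow> fvec" where
  "ann \<psi> n = complex_of_real (sqrt (real (Suc n))) * \<psi> (Suc n)"

definition adag :: "fvec \<Rightarrow> fvec" where
  "adag \<psi> n = (case n of 0 \<Rightarrow> 0 | Suc m \<Rightarrow> complex_of_real (sqrt (real (Suc m))) * \<psi> m)"

definition op_exp :: "(fvec \<Rightarrow> fvec) \<Rightarrow> fvec \<Rightarrow> fvec" where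
  "op_exp X \<psi> = (\<lambda>n. \<Sum>m. (X ^^ m) \<psi> n / of_nat (fact m))"

definition displ_gen :: "complex \<Rightarrow> fvec \<Rightarrow> fvec" where
  "displ_gen b \<psi> = (\<lambda>n. b * adag \<psi> n - cnj b * ann \<psi> n)"

definition displ :: "complex \<Rightarrow> fvec \<Rightarrow> fvec" where
  "displ b = op_exp (displ_gen b)"

definition displ_adj :: "complex \<Rightarrow> fvec \<Rightarrow> fvec" where
  "displ_adj b = op_exp (\<lambda>\<psi> n. - displ_gen b \<psi> n)"

definition coh :: "complex \<Rightarrow> fvec" where
  "coh \<alpha> n = complex_of_real (exp (- ((cmod \<alpha>)^2) / 2)) * \<alpha> ^ n
              / complex_of_real (sqrt (fact n))"

text \<open>Squeeze operator S(z) = exp(1/2 (conj z a^2 - z a^dag^2)), z = r e^{i theta}, given in its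
  standard normal-ordered (disentangled) form
  S(z) = exp(-1/2 e^{i theta} tanh r a^dag^2) (cosh r)^{-(a^dag a + 1/2)} exp(1/2 e^{-i theta} tanh r a^2).\<close>

definition squeeze :: "complex \<Rightarrow> fvec \<Rightarrow> fvec" where
  "squeeze z \<psi> =
     (let r = cmod z;
          t = (if z = 0 then 0 else (z / complex_of_real r) * complex_of_real (tanh r));
          right = op_exp (\<lambda>\<phi> n. (cnj t / 2) * ann (ann \<phi>) n) \<psi>;
          mid = (\<lambda>n. complex_of_real ((cosh r) powr (- (real n + 1/2))) * right n)
      in op_exp (\<lambda>\<phi> n. - (t / 2) * adag (adag \<phi>) n) mid)"

definition coherent_rank_le :: "nat \<Rightarrow> fvec \<Rightarrow> bool" where
  "coherent_rank_le k \<psi> \<longleftrightarrow>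
     (\<exists>c \<alpha> :: nat \<Rightarrow> complex. \<psi> = (\<lambda>n. \<Sum>i<k. c i * coh (\<alpha> i) n))"

definition approx_coherent_rank_le :: "nat \<Rightarrow> fvec \<Rightarrow> bool" where
  "approx_coherent_rank_le m \<psi> \<longleftrightarrow>
     (\<forall>\<delta>>0. \<exists>\<phi>. coherent_rank_le m \<phi> \<and> sq_norm_f \<phi> = 1 \<and>
                   (cmod (inner_f \<psi> \<phi>))^2 > 1 - \<delta>)"

definition normalize_f :: "fvec \<Rightarrow> fvec" where
  "normalize_f v = (\<lambda>n. v n / complex_of_real (sqrt (sq_norm_f v)))"

definition dad :: "complex \<Rightarrow> fvec \<Rightarrow> fvec" where
  "dad b v = displ b (adag (displ_adj b v))"

end

theory Submission
  imports Defs "HOL-Complex_Analysis.Complex_Analysis" "HOL-Computational_Algebra.Polynomial_FPS"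
begin

(* In the Bargmann representation the Fock vector with coefficients sqrt(n!) f_n is the power
   series f: a^dag is multiplication by X, a is d/dX and the coherent state |beta> is a multiple
   of e^{beta X}. A state of coherent rank k is thus a combination S of k exponentials, and
   D(b) a^dag D(b)^dag acts on polynomials times exponentials as multiplication by X - conj b,
   so the state in question is Q S with Q a polynomial of degree r. Replacing each X^m in Q by
   ((e^{eX} - 1)/e)^m, a combination of the exponentials e^{jeX} with j <= r, turns Q S into a
   combination of k (r + 1) exponentials. Coefficient bounds of exponential type show that these
   converge to Q S in the Fock norm as e -> 0, and norm convergence forces the overlaps of the
   normalised states to tend to 1. The squeezed state enters only through this decomposition and
   through its nonzero vacuum coefficient, which makes Q S nonzero. *)

unbundle no vec_syntax

section \<open>The operator c1 X + c2 d/dX on power series and its exponential\<close>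

definition fps_xd :: "complex \<Rightarrow> complex \<Rightarrow> complex fps \<Rightarrow> complex fps" where
  "fps_xd c1 c2 g = fps_const c1 * fps_X * g + fps_const c2 * fps_deriv g"

lemma fps_xd_nth:
  "fps_xd c1 c2 g $ n = c1 * (if n = 0 then 0 else g $ (n - 1)) + c2 * (of_nat (n + 1) * g $ (n + 1))"
  unfolding fps_xd_def by (simp add: mult.assoc)

lemma fps_xd_add: "fps_xd c1 c2 (f + g) = fps_xd c1 c2 f + fps_xd c1 c2 g"
  unfolding fps_xd_def by (simp add: algebra_simps)

lemma fps_xd_const_mult: "fps_xd c1 c2 (fps_const a * f) = fps_const a * fps_xd c1 c2 f"
  unfolding fps_xd_def by (simp add: algebra_simps)

lemma fps_xd_X_mult: "fps_xd c1 c2 (fps_X * f) = fps_X * fps_xd c1 c2 f + fps_const c2 * f"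
  unfolding fps_xd_def by (simp add: algebra_simps)

lemma funpow_fps_xd_add: "(fps_xd c1 c2 ^^ m) (f + g) = (fps_xd c1 c2 ^^ m) f + (fps_xd c1 c2 ^^ m) g"
  by (induction m) (simp_all add: fps_xd_add)

lemma funpow_fps_xd_const_mult:
  "(fps_xd c1 c2 ^^ m) (fps_const a * f) = fps_const a * (fps_xd c1 c2 ^^ m) f"
  by (induction m) (simp_all add: fps_xd_const_mult)

lemma funpow_fps_xd_zero: "(fps_xd c1 c2 ^^ m) 0 = 0"
  using funpow_fps_xd_const_mult[where a = 0 and f = 0] by simp

text \<open>The commutator [c1 X + c2 d/dX, X] = c2, iterated.\<close>

lemma funpow_fps_xd_X_mult:
  "(fps_xd c1 c2 ^^ m) (fps_X * f)
     = fps_X * (fps_xd c1 c2 ^^ m) f + fps_const (of_nat m * c2) * (fps_xd c1 c2 ^^ (m - 1)) f"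
proof (induction m)
  case (Suc m)
  have "(fps_xd c1 c2 ^^ Suc m) (fps_X * f)
      = fps_X * (fps_xd c1 c2 ^^ Suc m) f + fps_const c2 * (fps_xd c1 c2 ^^ m) f
        + fps_const (of_nat m * c2) * fps_xd c1 c2 ((fps_xd c1 c2 ^^ (m - 1)) f)"
    by (simp add: Suc fps_xd_add fps_xd_const_mult fps_xd_X_mult)
  also have "fps_const (of_nat m * c2) * fps_xd c1 c2 ((fps_xd c1 c2 ^^ (m - 1)) f)
      = fps_const (of_nat m * c2) * (fps_xd c1 c2 ^^ m) f"
    by (cases m) simp_all
  finally show ?case
    by (simp add: algebra_simps flip: fps_const_add)
qed simp

definition xd_exp_summable :: "complex \<Rightarrow> complex \<Rightarrow> complex fps \<Rightarrow> bool" where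
  "xd_exp_summable c1 c2 g \<longleftrightarrow> (\<forall>n. summable (\<lambda>m. (fps_xd c1 c2 ^^ m) g $ n / fact m))"

definition xd_exp :: "complex \<Rightarrow> complex \<Rightarrow> complex fps \<Rightarrow> complex fps" where
  "xd_exp c1 c2 g = Abs_fps (\<lambda>n. \<Sum>m. (fps_xd c1 c2 ^^ m) g $ n / fact m)"

lemma xd_exp_nth: "xd_exp c1 c2 g $ n = (\<Sum>m. (fps_xd c1 c2 ^^ m) g $ n / fact m)"
  unfolding xd_exp_def by simp

lemma has_field_derivative_funpow_fps_xd:
  assumes "\<And>s n. ((\<lambda>s. g s $ n) has_field_derivative g' s $ n) (at s)"
  shows "((\<lambda>s. (fps_xd c1 c2 ^^ m) (g s) $ n) has_field_derivative (fps_xd c1 c2 ^^ m) (g' s) $ n) (at s)"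
  using assms
proof (induction m arbitrary: g g' n s)
  case (Suc m)
  have "((\<lambda>s. fps_xd c1 c2 (g s) $ n) has_field_derivative fps_xd c1 c2 (g' s) $ n) (at s)" for s n
    unfolding fps_xd_nth using Suc.prems by (auto intro!: derivative_eq_intros)
  then show ?case
    unfolding funpow_Suc_right comp_def by (rule Suc.IH)
qed simp

text \<open>The flow e^{sL} applied to e^{\<beta> X}; its Taylor expansion at s = 0 computes e^L e^{\<beta> X}.\<close>

definition xd_flow :: "complex \<Rightarrow> complex \<Rightarrow> complex \<Rightarrow> complex \<Rightarrow> complex fps" where
  "xd_flow c1 c2 \<beta> s = fps_const (exp (s\<^sup>2 * c1 * c2 / 2 + s * \<beta> * c2)) * fps_exp (\<beta> + s * c1)"

lemma xd_flow_nth: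
  "xd_flow c1 c2 \<beta> s $ n = exp (s\<^sup>2 * c1 * c2 / 2 + s * \<beta> * c2) * ((\<beta> + s * c1) ^ n / fact n)"
  unfolding xd_flow_def by simp

lemma has_field_derivative_xd_flow:
  "((\<lambda>s. xd_flow c1 c2 \<beta> s $ n) has_field_derivative fps_xd c1 c2 (xd_flow c1 c2 \<beta> s) $ n) (at s)"
proof -
  define E where "E = exp (s\<^sup>2 * c1 * c2 / 2 + s * \<beta> * c2)"
  define x where "x = \<beta> + s * c1"
  have "((\<lambda>s. xd_flow c1 c2 \<beta> s $ n) has_field_derivative
      E * (c2 * x) * (x ^ n / fact n) + E * (of_nat n * x ^ (n - 1) * c1 / fact n)) (at s)"
    unfolding xd_flow_nth E_def x_def
    by (auto intro!: derivative_eq_intros simp: field_simps power2_eq_square)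
  also have "E * (c2 * x) * (x ^ n / fact n) + E * (of_nat n * x ^ (n - 1) * c1 / fact n)
      = fps_xd c1 c2 (xd_flow c1 c2 \<beta> s) $ n"
  proof (cases n)
    case (Suc k)
    have "(fact (Suc (Suc k)) :: complex) = of_nat (Suc (Suc k)) * fact (Suc k)"
      by (simp only: fact_Suc of_nat_mult)
    moreover have "(fact (Suc k) :: complex) = of_nat (Suc k) * fact k"
      by (simp only: fact_Suc of_nat_mult)
    ultimately show ?thesis
      unfolding fps_xd_nth xd_flow_nth E_def[symmetric] x_def[symmetric] Suc
      by (simp add: field_simps del: fact_Suc of_nat_Suc)
  qed (simp add: fps_xd_nth xd_flow_nth E_def x_def field_simps)
  finally show ?thesis .
qed

lemma higher_deriv_xd_flow:
  "(deriv ^^ m) (\<lambda>s. xd_flow c1 c2 \<beta> s $ n) = (\<lambda>s. (fps_xd c1 c2 ^^ m) (xd_flow c1 c2 \<beta> s) $ n)"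
proof (induction m arbitrary: n)
  case (Suc m)
  have "(deriv ^^ Suc m) (\<lambda>s. xd_flow c1 c2 \<beta> s $ n)
      = deriv (\<lambda>s. (fps_xd c1 c2 ^^ m) (xd_flow c1 c2 \<beta> s) $ n)"
    by (simp add: Suc)
  also have "\<dots> = (\<lambda>s. (fps_xd c1 c2 ^^ m) (fps_xd c1 c2 (xd_flow c1 c2 \<beta> s)) $ n)"
    by (intro ext DERIV_imp_deriv has_field_derivative_funpow_fps_xd has_field_derivative_xd_flow)
  finally show ?case by (simp add: funpow_Suc_right del: funpow.simps)
qed simp

lemma xd_exp_series_fps_exp:
  "(\<lambda>m. (fps_xd c1 c2 ^^ m) (fps_exp \<beta>) $ n / fact m) sums (xd_flow c1 c2 \<beta> 1 $ n)"
proof -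
  have "(\<lambda>s. xd_flow c1 c2 \<beta> s $ n) holomorphic_on ball 0 2"
    unfolding xd_flow_nth by (intro holomorphic_intros) auto
  then have "(\<lambda>m. (deriv ^^ m) (\<lambda>s. xd_flow c1 c2 \<beta> s $ n) 0 / fact m * (1 - 0) ^ m)
      sums (xd_flow c1 c2 \<beta> 1 $ n)"
    by (rule holomorphic_power_series) simp
  moreover have "xd_flow c1 c2 \<beta> 0 = fps_exp \<beta>"
    unfolding xd_flow_def by simp
  ultimately show ?thesis by (simp add: higher_deriv_xd_flow)
qed

lemma xd_exp_summable_fps_exp: "xd_exp_summable c1 c2 (fps_exp \<beta>)"
  unfolding xd_exp_summable_def using xd_exp_series_fps_exp sums_summable by blast

lemma xd_exp_fps_exp:
  "xd_exp c1 c2 (fps_exp \<beta>) = fps_const (exp (c1 * c2 / 2 + \<beta> * c2)) * fps_exp (\<beta> + c1)"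
proof -
  have "xd_exp c1 c2 (fps_exp \<beta>) = xd_flow c1 c2 \<beta> 1"
    by (rule fps_ext) (simp add: xd_exp_nth sums_unique[OF xd_exp_series_fps_exp, symmetric])
  then show ?thesis by (simp add: xd_flow_def)
qed

lemma xd_exp_add:
  assumes "xd_exp_summable c1 c2 f" "xd_exp_summable c1 c2 g"
  shows "xd_exp_summable c1 c2 (f + g)" "xd_exp c1 c2 (f + g) = xd_exp c1 c2 f + xd_exp c1 c2 g"
proof -
  have split: "(fps_xd c1 c2 ^^ m) (f + g) $ n / fact m
      = (fps_xd c1 c2 ^^ m) f $ n / fact m + (fps_xd c1 c2 ^^ m) g $ n / fact m" for m n
    by (simp add: funpow_fps_xd_add add_divide_distrib)
  show "xd_exp_summable c1 c2 (f + g)"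
    using assms unfolding xd_exp_summable_def split by (auto intro: summable_add)
  show "xd_exp c1 c2 (f + g) = xd_exp c1 c2 f + xd_exp c1 c2 g"
    using assms unfolding xd_exp_summable_def by (intro fps_ext) (simp add: xd_exp_nth split suminf_add)
qed

lemma xd_exp_const_mult:
  assumes "xd_exp_summable c1 c2 f"
  shows "xd_exp_summable c1 c2 (fps_const a * f)"
    "xd_exp c1 c2 (fps_const a * f) = fps_const a * xd_exp c1 c2 f"
proof -
  have split: "(fps_xd c1 c2 ^^ m) (fps_const a * f) $ n / fact m = a * ((fps_xd c1 c2 ^^ m) f $ n / fact m)"
    for m n
    by (simp add: funpow_fps_xd_const_mult)
  show "xd_exp_summable c1 c2 (fps_const a * f)"
    using assms unfolding xd_exp_summable_def split by (simp only: summable_mult simp_thms)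
  show "xd_exp c1 c2 (fps_const a * f) = fps_const a * xd_exp c1 c2 f"
    using assms unfolding xd_exp_summable_def
    by (intro fps_ext) (simp only: xd_exp_nth split suminf_mult fps_mult_left_const_nth)
qed

lemma xd_exp_zero: "xd_exp_summable c1 c2 0" "xd_exp c1 c2 0 = 0"
  by (auto simp: xd_exp_summable_def xd_exp_def funpow_fps_xd_zero intro!: fps_ext)

lemma xd_exp_sum:
  assumes "\<And>i. i \<in> A \<Longrightarrow> xd_exp_summable c1 c2 (f i)"
  shows "xd_exp_summable c1 c2 (\<Sum>i\<in>A. f i) \<and> xd_exp c1 c2 (\<Sum>i\<in>A. f i) = (\<Sum>i\<in>A. xd_exp c1 c2 (f i))"
  using assms
proof (induction A rule: infinite_finite_induct)
  case (insert x F)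
  then show ?case by (simp add: xd_exp_add)
qed (simp_all add: xd_exp_zero)

lemma xd_exp_X_mult:
  assumes "xd_exp_summable c1 c2 f"
  shows "xd_exp_summable c1 c2 (fps_X * f)"
    "xd_exp c1 c2 (fps_X * f) = (fps_X + fps_const c2) * xd_exp c1 c2 f"
proof -
  have shifted: "(\<lambda>m. (if n = 0 then 0 else (fps_xd c1 c2 ^^ m) f $ (n - 1)) / fact m)
      sums (if n = 0 then 0 else xd_exp c1 c2 f $ (n - 1))" for n
    using assms unfolding xd_exp_summable_def xd_exp_nth by (auto intro: summable_sums)
  have commutator: "(\<lambda>m. of_nat m * c2 * (fps_xd c1 c2 ^^ (m - 1)) f $ n / fact m)
      sums (c2 * xd_exp c1 c2 f $ n)" for n
  proof -
    have "(\<lambda>m. c2 * ((fps_xd c1 c2 ^^ m) f $ n / fact m)) sums (c2 * xd_exp c1 c2 f $ n)"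
      using assms unfolding xd_exp_summable_def xd_exp_nth by (intro sums_mult summable_sums) auto
    moreover have "c2 * ((fps_xd c1 c2 ^^ m) f $ n / fact m)
        = of_nat (Suc m) * c2 * (fps_xd c1 c2 ^^ (Suc m - 1)) f $ n / fact (Suc m)" for m
      by (simp add: field_simps del: of_nat_Suc)
    ultimately have "(\<lambda>m. of_nat (Suc m) * c2 * (fps_xd c1 c2 ^^ (Suc m - 1)) f $ n / fact (Suc m))
        sums (c2 * xd_exp c1 c2 f $ n)"
      by simp
    then show ?thesis by (subst (asm) sums_Suc_iff) simp
  qed
  have "(\<lambda>m. (fps_xd c1 c2 ^^ m) (fps_X * f) $ n / fact m)
      sums ((if n = 0 then 0 else xd_exp c1 c2 f $ (n - 1)) + c2 * xd_exp c1 c2 f $ n)" for n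
    unfolding funpow_fps_xd_X_mult using sums_add[OF shifted commutator]
    by (simp add: add_divide_distrib)
  then show "xd_exp_summable c1 c2 (fps_X * f)"
    and "xd_exp c1 c2 (fps_X * f) = (fps_X + fps_const c2) * xd_exp c1 c2 f"
    unfolding xd_exp_summable_def
    by (auto intro!: fps_ext sums_summable simp: xd_exp_nth[of _ _ "fps_X * f"] sums_iff distrib_right)
qed

lemma xd_exp_poly_mult:
  assumes "xd_exp_summable c1 c2 f"
  shows "xd_exp_summable c1 c2 (fps_of_poly p * f) \<and>
    xd_exp c1 c2 (fps_of_poly p * f) = fps_of_poly (pcompose p [:c2, 1:]) * xd_exp c1 c2 f"
proof (induction p rule: pCons_induct)
  case (pCons a p)
  have split: "fps_of_poly (pCons a p) * f = fps_const a * f + fps_X * (fps_of_poly p * f)"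
    by (simp add: fps_of_poly_pCons algebra_simps)
  have shifted: "fps_of_poly (pcompose (pCons a p) [:c2, 1:])
      = fps_const a + (fps_X + fps_const c2) * fps_of_poly (pcompose p [:c2, 1:])"
    by (simp add: pcompose_pCons fps_of_poly_add fps_of_poly_mult fps_of_poly_linear)
  have IH: "xd_exp_summable c1 c2 (fps_of_poly p * f)"
    "xd_exp c1 c2 (fps_of_poly p * f) = fps_of_poly (pcompose p [:c2, 1:]) * xd_exp c1 c2 f"
    using pCons.IH by auto
  note X_mult = xd_exp_X_mult[OF IH(1)]
  have "xd_exp_summable c1 c2 (fps_const a * f + fps_X * (fps_of_poly p * f))"
    "xd_exp c1 c2 (fps_const a * f + fps_X * (fps_of_poly p * f))
      = fps_const a * xd_exp c1 c2 f
        + (fps_X + fps_const c2) * (fps_of_poly (pcompose p [:c2, 1:]) * xd_exp c1 c2 f)"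
    using xd_exp_add[OF xd_exp_const_mult(1)[OF assms] X_mult(1)] xd_exp_const_mult(2)[OF assms]
      X_mult(2) IH(2)
    by simp_all
  then show ?case
    unfolding split shifted by (simp add: algebra_simps)
qed (simp add: xd_exp_zero)

lemma xd_exp_exp_sum:
  "xd_exp_summable c1 c2 (\<Sum>i\<in>A. fps_const (c i) * fps_exp (\<beta> i)) \<and>
   xd_exp c1 c2 (\<Sum>i\<in>A. fps_const (c i) * fps_exp (\<beta> i)) =
     (\<Sum>i\<in>A. fps_const (c i * exp (c1 * c2 / 2 + \<beta> i * c2)) * fps_exp (\<beta> i + c1))"
  using xd_exp_sum[of A c1 c2, OF xd_exp_const_mult(1)[OF xd_exp_summable_fps_exp]]
  by (simp add: xd_exp_const_mult(2)[OF xd_exp_summable_fps_exp] xd_exp_fps_exp mult.assoc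
      flip: fps_const_mult)

section \<open>The Bargmann representation\<close>

definition fock_of_fps :: "complex fps \<Rightarrow> fvec" where
  "fock_of_fps f = (\<lambda>n. complex_of_real (sqrt (fact n)) * f $ n)"

lemma adag_fock_of_fps: "adag (fock_of_fps f) = fock_of_fps (fps_X * f)"
proof
  fix n show "adag (fock_of_fps f) n = fock_of_fps (fps_X * f) n"
    by (cases n) (simp_all add: adag_def fock_of_fps_def real_sqrt_mult mult.assoc del: of_nat_Suc)
qed

lemma ann_fock_of_fps: "ann (fock_of_fps f) = fock_of_fps (fps_deriv f)"
proof
  fix n
  have "sqrt (real (Suc n)) * sqrt (fact (Suc n)) = real (Suc n) * sqrt (fact n)"
    by (simp add: real_sqrt_mult del: of_nat_Suc)
  then have "complex_of_real (sqrt (real (Suc n))) * complex_of_real (sqrt (fact (Suc n)))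
      = of_nat (Suc n) * complex_of_real (sqrt (fact n))"
    by (metis of_real_mult of_real_of_nat_eq)
  then show "ann (fock_of_fps f) n = fock_of_fps (fps_deriv f) n"
    unfolding ann_def fock_of_fps_def fps_deriv_nth
    by (simp only: mult.assoc[symmetric]) (simp add: ac_simps)
qed

lemma fock_of_fps_add: "fock_of_fps (f + g) = (\<lambda>n. fock_of_fps f n + fock_of_fps g n)"
  by (simp add: fock_of_fps_def fun_eq_iff distrib_left)

lemma fock_of_fps_const_mult: "fock_of_fps (fps_const a * f) = (\<lambda>n. a * fock_of_fps f n)"
  by (simp add: fock_of_fps_def fun_eq_iff)

lemma fock_of_fps_sum: "fock_of_fps (\<Sum>i\<in>A. f i) = (\<lambda>n. \<Sum>i\<in>A. fock_of_fps (f i) n)"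
  by (simp add: fock_of_fps_def fun_eq_iff sum_distrib_left fps_sum_nth)

lemma fock_of_fps_diff: "fock_of_fps (f - g) = (\<lambda>n. fock_of_fps f n - fock_of_fps g n)"
  by (simp add: fock_of_fps_def fun_eq_iff right_diff_distrib)

lemma coh_eq_fock_of_fps:
  "coh \<beta> = fock_of_fps (fps_const (complex_of_real (exp (- (cmod \<beta>)\<^sup>2 / 2))) * fps_exp \<beta>)"
proof
  fix n
  have "(fact n :: complex) = complex_of_real (sqrt (fact n)) * complex_of_real (sqrt (fact n))"
    by (simp flip: of_real_mult)
  moreover have "complex_of_real (sqrt (fact n)) \<noteq> 0" by simp
  ultimately show "coh \<beta> n = fock_of_fps (fps_const (complex_of_real (exp (- (cmod \<beta>)\<^sup>2 / 2))) * fps_exp \<beta>) n"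
    unfolding coh_def fock_of_fps_def by (simp add: field_simps)
qed

lemma fock_of_fps_exp:
  "fock_of_fps (fps_exp \<beta>) = (\<lambda>n. complex_of_real (exp ((cmod \<beta>)\<^sup>2 / 2)) * coh \<beta> n)"
proof -
  have "complex_of_real (exp ((cmod \<beta>)\<^sup>2 / 2)) * complex_of_real (exp (- (cmod \<beta>)\<^sup>2 / 2)) = 1"
    by (simp flip: of_real_mult exp_add)
  then show ?thesis
    by (simp add: coh_eq_fock_of_fps fock_of_fps_const_mult mult.assoc[symmetric])
qed

lemma ann_coh: "ann (coh \<beta>) = (\<lambda>n. \<beta> * coh \<beta> n)"
  unfolding coh_eq_fock_of_fps ann_fock_of_fps
  by (simp add: fock_of_fps_const_mult[symmetric] mult.assoc[symmetric] mult.commute)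

lemma op_exp_fock_of_fps:
  assumes "\<And>g. X (fock_of_fps g) = fock_of_fps (fps_xd c1 c2 g)" and "xd_exp_summable c1 c2 f"
  shows "op_exp X (fock_of_fps f) = fock_of_fps (xd_exp c1 c2 f)"
proof
  fix n
  have "(X ^^ m) (fock_of_fps f) = fock_of_fps ((fps_xd c1 c2 ^^ m) f)" for m
    by (induction m) (simp_all add: assms(1))
  then have "op_exp X (fock_of_fps f) n
      = (\<Sum>m. complex_of_real (sqrt (fact n)) * ((fps_xd c1 c2 ^^ m) f $ n / fact m))"
    by (simp add: op_exp_def fock_of_fps_def mult.assoc)
  also have "\<dots> = complex_of_real (sqrt (fact n)) * xd_exp c1 c2 f $ n"
    using assms(2) unfolding xd_exp_summable_def xd_exp_nth by (intro suminf_mult) auto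
  finally show "op_exp X (fock_of_fps f) n = fock_of_fps (xd_exp c1 c2 f) n"
    by (simp add: fock_of_fps_def)
qed

lemma displ_fock_of_fps:
  assumes "xd_exp_summable b (- cnj b) f"
  shows "displ b (fock_of_fps f) = fock_of_fps (xd_exp b (- cnj b) f)"
  unfolding displ_def
  by (rule op_exp_fock_of_fps[OF _ assms])
    (simp add: displ_gen_def fps_xd_def adag_fock_of_fps ann_fock_of_fps fock_of_fps_add
      fock_of_fps_const_mult mult.assoc fun_eq_iff)

lemma displ_adj_fock_of_fps:
  assumes "xd_exp_summable (- b) (cnj b) f"
  shows "displ_adj b (fock_of_fps f) = fock_of_fps (xd_exp (- b) (cnj b) f)"
  unfolding displ_adj_def
  by (rule op_exp_fock_of_fps[OF _ assms])
    (simp add: displ_gen_def fps_xd_def adag_fock_of_fps ann_fock_of_fps fock_of_fps_add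
      fock_of_fps_const_mult mult.assoc fun_eq_iff)

definition exp_combination :: "nat \<Rightarrow> complex fps \<Rightarrow> bool" where
  "exp_combination m f \<longleftrightarrow> (\<exists>c \<beta>. f = (\<Sum>i<m. fps_const (c i) * fps_exp (\<beta> i)))"

lemma coherent_rank_le_iff_exp_combination:
  "coherent_rank_le m v \<longleftrightarrow> (\<exists>f. exp_combination m f \<and> v = fock_of_fps f)"
proof
  assume "coherent_rank_le m v"
  then obtain c \<beta> where v: "v = (\<lambda>n. \<Sum>i<m. c i * coh (\<beta> i) n)"
    unfolding coherent_rank_le_def by blast
  define c' where "c' i = c i * complex_of_real (exp (- (cmod (\<beta> i))\<^sup>2 / 2))" for i
  have "v = fock_of_fps (\<Sum>i<m. fps_const (c' i) * fps_exp (\<beta> i))"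
    by (simp add: v c'_def fock_of_fps_sum fock_of_fps_const_mult coh_eq_fock_of_fps mult.assoc)
  then show "\<exists>f. exp_combination m f \<and> v = fock_of_fps f"
    unfolding exp_combination_def by blast
next
  assume "\<exists>f. exp_combination m f \<and> v = fock_of_fps f"
  then obtain c \<beta> where v: "v = fock_of_fps (\<Sum>i<m. fps_const (c i) * fps_exp (\<beta> i))"
    unfolding exp_combination_def by blast
  define c' where "c' i = c i * complex_of_real (exp ((cmod (\<beta> i))\<^sup>2 / 2))" for i
  have "v = (\<lambda>n. \<Sum>i<m. c' i * coh (\<beta> i) n)"
    by (simp add: v c'_def fock_of_fps_sum fock_of_fps_const_mult fock_of_fps_exp mult.assoc)
  then show "coherent_rank_le m v"
    unfolding coherent_rank_le_def by blast
qed

lemma coherent_rank_le_divide: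
  assumes "coherent_rank_le m v"
  shows "coherent_rank_le m (\<lambda>n. v n / a)"
proof -
  obtain c \<beta> where "v = (\<lambda>n. \<Sum>i<m. c i * coh (\<beta> i) n)"
    using assms unfolding coherent_rank_le_def by blast
  then have "(\<lambda>n. v n / a) = (\<lambda>n. \<Sum>i<m. (c i / a) * coh (\<beta> i) n)"
    by (simp add: sum_divide_distrib)
  then show ?thesis
    unfolding coherent_rank_le_def by (intro exI)
qed

lemma exp_combination_mult:
  assumes "exp_combination p f" "exp_combination q g"
  shows "exp_combination (p * q) (f * g)"
proof -
  obtain a \<alpha> b \<beta> where f: "f = (\<Sum>i<p. fps_const (a i) * fps_exp (\<alpha> i))"
    and g: "g = (\<Sum>j<q. fps_const (b j) * fps_exp (\<beta> j))"
    using assms unfolding exp_combination_def by blast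
  define h where "h l = fps_const (a (l div q) * b (l mod q)) * fps_exp (\<alpha> (l div q) + \<beta> (l mod q))"
    for l
  have "f * g = (\<Sum>i<p. \<Sum>j<q. fps_const (a i * b j) * fps_exp (\<alpha> i + \<beta> j))"
    by (simp add: f g sum_product fps_exp_add_mult mult_ac flip: fps_const_mult)
  also have "\<dots> = (\<Sum>i<p. \<Sum>j<q. h (j + i * q))"
    by (intro sum.cong refl) (simp add: h_def)
  also have "\<dots> = (\<Sum>l<p * q. h l)"
    by (rule sum_mult_product[symmetric])
  finally show ?thesis
    unfolding exp_combination_def h_def by (intro exI)
qed

lemma coherent_rank_le_mono:
  assumes "coherent_rank_le m v" "m \<le> m'"
  shows "coherent_rank_le m' v"
proof -
  obtain c \<beta> where v: "v = (\<lambda>n. \<Sum>i<m. c i * coh (\<beta> i) n)"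
    using assms(1) unfolding coherent_rank_le_def by blast
  have "v = (\<lambda>n. \<Sum>i<m'. (if i < m then c i else 0) * coh (\<beta> i) n)"
    unfolding v using assms(2) by (intro ext sum.mono_neutral_cong_left) auto
  then show ?thesis
    unfolding coherent_rank_le_def by (intro exI)
qed

lemma approx_coherent_rank_le_mono:
  "approx_coherent_rank_le m v \<Longrightarrow> m \<le> m' \<Longrightarrow> approx_coherent_rank_le m' v"
  unfolding approx_coherent_rank_le_def by (meson coherent_rank_le_mono)

text \<open>D(b)^dag acts on a polynomial times exponentials by the substitution X := X + cnj b
  (up to rescaling the exponentials) and D(b) undoes it, so D(b) a^dag D(b)^dag multiplies by X - cnj b.\<close>

lemma dad_fock_of_fps:
  "dad b (fock_of_fps (fps_of_poly p * (\<Sum>i\<in>A. fps_const (c i) * fps_exp (\<beta> i)))) =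
   fock_of_fps (fps_of_poly ([:- cnj b, 1:] * p) * (\<Sum>i\<in>A. fps_const (c i) * fps_exp (\<beta> i)))"
proof -
  define S where "S = (\<Sum>i\<in>A. fps_const (c i) * fps_exp (\<beta> i))"
  define c' where "c' i = c i * exp (- b * cnj b / 2 + \<beta> i * cnj b)" for i
  define S' where "S' = (\<Sum>i\<in>A. fps_const (c' i) * fps_exp (\<beta> i - b))"
  have S: "xd_exp_summable (- b) (cnj b) S" "xd_exp (- b) (cnj b) S = S'"
    using xd_exp_exp_sum[of "- b" "cnj b" c \<beta> A] by (simp_all add: S_def S'_def c'_def)
  have "c' i * exp (- (b * cnj b / 2) - (\<beta> i - b) * cnj b) = c i" for i
    by (simp add: c'_def mult.assoc flip: exp_add) (simp add: algebra_simps)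
  then have S': "xd_exp_summable b (- cnj b) S'" "xd_exp b (- cnj b) S' = S"
    using xd_exp_exp_sum[of b "- cnj b" c' "\<lambda>i. \<beta> i - b" A] by (simp_all add: S_def S'_def)
  have pcompose_shift: "pcompose ([:0, 1:] * pcompose p [:cnj b, 1:]) [:- cnj b, 1:] = [:- cnj b, 1:] * p"
    by (simp add: pcompose_mult pcompose_pCons pcompose_assoc[symmetric])
  have "displ_adj b (fock_of_fps (fps_of_poly p * S))
      = fock_of_fps (fps_of_poly (pcompose p [:cnj b, 1:]) * S')"
    using xd_exp_poly_mult[OF S(1), of p] by (simp add: displ_adj_fock_of_fps S(2))
  moreover have "adag (fock_of_fps (fps_of_poly (pcompose p [:cnj b, 1:]) * S'))
      = fock_of_fps (fps_of_poly ([:0, 1:] * pcompose p [:cnj b, 1:]) * S')"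
    by (simp add: adag_fock_of_fps fps_of_poly_pCons mult_ac)
  moreover have "displ b (fock_of_fps (fps_of_poly ([:0, 1:] * pcompose p [:cnj b, 1:]) * S'))
      = fock_of_fps (fps_of_poly ([:- cnj b, 1:] * p) * S)"
    using xd_exp_poly_mult[OF S'(1), of "[:0, 1:] * pcompose p [:cnj b, 1:]"]
    unfolding pcompose_shift by (simp add: displ_fock_of_fps S'(2))
  ultimately show ?thesis
    by (simp add: dad_def S_def)
qed

definition dad_poly :: "complex list \<Rightarrow> complex poly" where
  "dad_poly bs = (\<Prod>b\<leftarrow>bs. [:- cnj b, 1:])"

lemma dad_poly_Nil: "dad_poly [] = 1"
  by (simp add: dad_poly_def)

lemma dad_poly_Cons: "dad_poly (b # bs) = [:- cnj b, 1:] * dad_poly bs"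
  by (simp add: dad_poly_def)

lemma dad_poly_nonzero: "dad_poly bs \<noteq> 0"
  by (auto simp: dad_poly_def prod_list_zero_iff)

lemma degree_dad_poly: "degree (dad_poly bs) \<le> length bs"
proof (induction bs)
  case (Cons b bs)
  show ?case
    unfolding dad_poly_Cons by (rule order.trans[OF degree_mult_le]) (use Cons.IH in simp)
qed (simp add: dad_poly_Nil)

lemma foldr_dad_fock_of_fps:
  "foldr dad bs (fock_of_fps (\<Sum>i\<in>A. fps_const (c i) * fps_exp (\<beta> i))) =
   fock_of_fps (fps_of_poly (dad_poly bs) * (\<Sum>i\<in>A. fps_const (c i) * fps_exp (\<beta> i)))"
  by (induction bs) (simp_all add: dad_poly_Nil dad_poly_Cons dad_fock_of_fps del: mult_pCons_left)

lemma foldr_dad_exp_combination: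
  assumes "exp_combination m f"
  shows "foldr dad bs (fock_of_fps f) = fock_of_fps (fps_of_poly (dad_poly bs) * f)"
  using assms foldr_dad_fock_of_fps unfolding exp_combination_def by blast

section \<open>The vacuum coefficient of a squeezed coherent state\<close>

lemma ann_scale: "ann (\<lambda>n. c * v n) = (\<lambda>n. c * ann v n)"
  by (simp add: ann_def fun_eq_iff ac_simps)

lemma op_exp_eigenvector:
  assumes "\<And>c \<phi>. X (\<lambda>n. c * \<phi> n) = (\<lambda>n. c * X \<phi> n)" and "X v = (\<lambda>n. w * v n)"
  shows "op_exp X v = (\<lambda>n. exp w * v n)"
proof
  fix n
  have "(X ^^ m) v = (\<lambda>n. w ^ m * v n)" for m
  proof (induction m)
    case (Suc m)
    then show ?case by (simp add: assms(1)) (simp add: assms(2) mult_ac)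
  qed simp
  moreover have "(\<lambda>m. w ^ m /\<^sub>R fact m * v n) sums (exp w * v n)"
    by (intro sums_mult2 exp_converges)
  ultimately have "(\<lambda>m. (X ^^ m) v n / fact m) sums (exp w * v n)"
    by (simp add: scaleR_conv_of_real field_simps)
  then show "op_exp X v n = exp w * v n"
    by (simp add: op_exp_def sums_iff)
qed

lemma op_exp_vacuum_coeff:
  assumes "\<And>\<phi>. X \<phi> 0 = 0"
  shows "op_exp X v 0 = v 0"
proof -
  have "(X ^^ m) v 0 / fact m = (if m = 0 then v 0 else 0)" for m
    using assms by (cases m) simp_all
  then show ?thesis
    using sums_single[of 0 "\<lambda>_. v 0"] by (simp add: op_exp_def sums_iff)
qed

text \<open>The normal-ordered form of the squeeze operator makes the vacuum coefficient explicit: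
  the a^2 part only rescales a coherent state, and the a^dag^2 part does not reach the vacuum.\<close>

lemma squeeze_coh_vacuum_nonzero: "squeeze z (coh \<alpha>) 0 \<noteq> 0"
proof -
  define t where "t = (if z = 0 then 0 else (z / complex_of_real (cmod z)) * complex_of_real (tanh (cmod z)))"
  define right where "right = op_exp (\<lambda>\<phi> n. (cnj t / 2) * ann (ann \<phi>) n) (coh \<alpha>)"
  have "ann (ann (coh \<alpha>)) = (\<lambda>n. \<alpha>\<^sup>2 * coh \<alpha> n)"
    by (simp add: ann_coh ann_scale power2_eq_square mult.assoc)
  then have "right = (\<lambda>n. exp (cnj t / 2 * \<alpha>\<^sup>2) * coh \<alpha> n)"
    unfolding right_def by (intro op_exp_eigenvector) (simp_all add: ann_scale fun_eq_iff)
  moreover have "coh \<alpha> 0 \<noteq> 0" and "cosh (cmod z) > 0"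
    by (simp_all add: coh_def cosh_real_pos)
  ultimately show ?thesis
    unfolding squeeze_def Let_def t_def[symmetric] right_def[symmetric]
    by (subst op_exp_vacuum_coeff) (simp_all add: adag_def)
qed

section \<open>Majorants of exponential type\<close>

definition exp_majorant :: "complex fps \<Rightarrow> real \<Rightarrow> real \<Rightarrow> bool" where
  "exp_majorant f a x \<longleftrightarrow> (\<forall>n. cmod (f $ n) \<le> a * x ^ n / fact n)"

lemma exp_majorant_mult:
  assumes "exp_majorant f a x" "exp_majorant g b y"
  shows "exp_majorant (f * g) (a * b) (x + y)"
  unfolding exp_majorant_def
proof
  fix n
  have "cmod ((f * g) $ n) \<le> (\<Sum>i=0..n. cmod (f $ i) * cmod (g $ (n - i)))"
    unfolding fps_mult_nth by (rule order.trans[OF norm_sum]) (simp add: norm_mult)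
  also have "\<dots> \<le> (\<Sum>i=0..n. (a * x ^ i / fact i) * (b * y ^ (n - i) / fact (n - i)))"
    using assms unfolding exp_majorant_def by (intro sum_mono mult_mono) (auto intro: order.trans[OF norm_ge_zero])
  also have "\<dots> = a * b * (fps_exp x * fps_exp y) $ n"
    by (simp add: fps_mult_nth sum_distrib_left field_simps)
  also have "\<dots> = a * b * (x + y) ^ n / fact n"
    by (simp add: fps_exp_add_mult[symmetric])
  finally show "cmod ((f * g) $ n) \<le> a * b * (x + y) ^ n / fact n" .
qed

lemma exp_majorant_add:
  assumes "exp_majorant f a x" "exp_majorant g b x"
  shows "exp_majorant (f + g) (a + b) x"
  using assms unfolding exp_majorant_def
  by (auto intro: order.trans[OF norm_triangle_ineq] simp: add_divide_distrib distrib_right add_mono)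

lemma exp_majorant_const_mult:
  assumes "exp_majorant f a x"
  shows "exp_majorant (fps_const c * f) (cmod c * a) x"
  unfolding exp_majorant_def
proof
  fix n
  have "cmod c * cmod (f $ n) \<le> cmod c * (a * x ^ n / fact n)"
    using assms unfolding exp_majorant_def by (intro mult_left_mono) auto
  then show "cmod ((fps_const c * f) $ n) \<le> cmod c * a * x ^ n / fact n"
    by (simp add: norm_mult)
qed

lemma exp_majorant_mono:
  assumes "exp_majorant f a x" "a \<le> a'" "0 \<le> a" "0 \<le> x" "x \<le> x'"
  shows "exp_majorant f a' x'"
  unfolding exp_majorant_def
proof
  fix n
  have "a * x ^ n / fact n \<le> a' * x' ^ n / fact n"
    using assms by (intro divide_right_mono mult_mono power_mono) auto
  then show "cmod (f $ n) \<le> a' * x' ^ n / fact n"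
    using assms(1) unfolding exp_majorant_def by (meson order.trans)
qed

lemma exp_majorant_sum:
  assumes "\<And>i. i \<in> A \<Longrightarrow> exp_majorant (f i) (a i) x"
  shows "exp_majorant (\<Sum>i\<in>A. f i) (\<Sum>i\<in>A. a i) x"
  using assms
proof (induction A rule: infinite_finite_induct)
  case (insert i A)
  then show ?case by (simp add: exp_majorant_add)
qed (simp_all add: exp_majorant_def)

lemma exp_majorant_power:
  assumes "exp_majorant f a x"
  shows "exp_majorant (f ^ m) (a ^ m) (of_nat m * x)"
proof (induction m)
  case (Suc m)
  then show ?case
    using exp_majorant_mult[OF assms Suc] by (simp add: algebra_simps)
qed (simp add: exp_majorant_def)

lemma exp_majorant_fps_exp: "exp_majorant (fps_exp \<beta>) 1 (cmod \<beta>)"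
  unfolding exp_majorant_def by (simp add: norm_divide norm_power)

lemma exp_majorant_fps_X: "exp_majorant fps_X 1 1"
  unfolding exp_majorant_def by simp

lemma fps_of_poly_as_sum_of_monoms:
  fixes p :: "'a :: comm_ring_1 poly"
  shows "fps_of_poly p = (\<Sum>m\<le>degree p. fps_const (coeff p m) * fps_X ^ m)"
  using arg_cong[where f = fps_of_poly, OF poly_as_sum_of_monoms[of p]]
  by (simp add: fps_of_poly_sum fps_of_poly_monom)

lemma exp_majorant_poly:
  fixes p :: "complex poly"
  shows "exp_majorant (fps_of_poly p) (\<Sum>m\<le>degree p. cmod (coeff p m)) (real (degree p))"
proof -
  have "exp_majorant (fps_X ^ m) 1 (real (degree p))" if "m \<le> degree p" for m
    using that by (intro exp_majorant_mono[OF exp_majorant_power[OF exp_majorant_fps_X, of m]]) auto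
  then have "exp_majorant (\<Sum>m\<le>degree p. fps_const (coeff p m) * fps_X ^ m)
      (\<Sum>m\<le>degree p. cmod (coeff p m) * 1) (real (degree p))"
    by (intro exp_majorant_sum exp_majorant_const_mult) simp
  then show ?thesis
    by (simp flip: fps_of_poly_as_sum_of_monoms)
qed

lemma exp_majorant_exp_sum:
  assumes "finite A"
  shows "exp_majorant (\<Sum>i\<in>A. fps_const (c i) * fps_exp (\<beta> i)) (\<Sum>i\<in>A. cmod (c i)) (\<Sum>i\<in>A. cmod (\<beta> i))"
proof -
  have "exp_majorant (fps_exp (\<beta> i)) 1 (\<Sum>i\<in>A. cmod (\<beta> i))" if "i \<in> A" for i
    using exp_majorant_fps_exp by (rule exp_majorant_mono) (use assms that in \<open>auto intro: member_le_sum\<close>)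
  then have "exp_majorant (\<Sum>i\<in>A. fps_const (c i) * fps_exp (\<beta> i))
      (\<Sum>i\<in>A. cmod (c i) * 1) (\<Sum>i\<in>A. cmod (\<beta> i))"
    by (intro exp_majorant_sum exp_majorant_const_mult)
  then show ?thesis
    by simp
qed

lemma exp_combination_imp_exp_majorant:
  assumes "exp_combination k S"
  obtains a x where "exp_majorant S a x"
  using assms exp_majorant_exp_sum[of "{..<k}"] unfolding exp_combination_def by blast

section \<open>Finite-difference approximation of polynomials\<close>

text \<open>The difference quotient (e^{eX} - 1)/e tends to X as e \<rightarrow> 0, and its powers are
  combinations of the exponentials e^{jeX}.\<close>

definition exp_diff_quot :: "real \<Rightarrow> complex fps" where
  "exp_diff_quot e = fps_const (complex_of_real (1 / e)) * (fps_exp (complex_of_real e) - 1)"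

lemma exp_diff_quot_nth:
  assumes "e \<noteq> 0"
  shows "exp_diff_quot e $ n = (if n = 0 then 0 else complex_of_real (e ^ (n - 1) / fact n))"
  using assms by (cases n) (simp_all add: exp_diff_quot_def field_simps)

lemma exp_majorant_exp_diff_quot:
  assumes "0 < e" "e \<le> 1"
  shows "exp_majorant (exp_diff_quot e) 1 1"
  unfolding exp_majorant_def
proof
  fix n
  have "e ^ (n - 1) / fact n \<le> 1 / (fact n :: real)"
    using assms by (intro divide_right_mono power_le_one) auto
  then show "cmod (exp_diff_quot e $ n) \<le> 1 * 1 ^ n / fact n"
    using assms by (simp add: exp_diff_quot_nth norm_divide norm_power)
qed

lemma exp_majorant_X_minus_exp_diff_quot:
  assumes "0 < e" "e \<le> 1"
  shows "exp_majorant (fps_X - exp_diff_quot e) e 1"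
  unfolding exp_majorant_def
proof
  fix n
  show "cmod ((fps_X - exp_diff_quot e) $ n) \<le> e * 1 ^ n / fact n"
  proof (cases "n \<le> 1")
    case True
    then have "n = 0 \<or> n = 1" by auto
    then show ?thesis using assms by (auto simp: exp_diff_quot_nth)
  next
    case False
    define k where "k = n - 2"
    have n: "n = Suc (Suc k)"
      using False by (simp add: k_def)
    have "(fps_X - exp_diff_quot e) $ n = - complex_of_real (e * e ^ k / fact n)"
      using assms by (simp add: n exp_diff_quot_nth del: fact_Suc)
    then have "cmod ((fps_X - exp_diff_quot e) $ n) = e * e ^ k / fact n"
      using assms by (simp only: norm_minus_cancel norm_of_real) simp
    also have "\<dots> \<le> e * 1 / fact n"
      using assms by (intro divide_right_mono mult_left_mono power_le_one) auto
    finally show ?thesis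
      by simp
  qed
qed

lemma exp_majorant_X_power_minus_exp_diff_quot_power:
  assumes "0 < e" "e \<le> 1"
  shows "exp_majorant (fps_X ^ m - exp_diff_quot e ^ m) (e * real m) (real m + 1)"
proof -
  have "exp_majorant (exp_diff_quot e ^ (m - Suc i) * fps_X ^ i) 1 (real m)" if "i < m" for i
  proof -
    have "exp_majorant (exp_diff_quot e ^ (m - Suc i) * fps_X ^ i)
        (1 ^ (m - Suc i) * 1 ^ i) (real (m - Suc i) * 1 + real i * 1)"
      by (intro exp_majorant_mult exp_majorant_power exp_majorant_exp_diff_quot exp_majorant_fps_X assms)
    then show ?thesis
      by (rule exp_majorant_mono) (use that in auto)
  qed
  then have "exp_majorant (\<Sum>i<m. exp_diff_quot e ^ (m - Suc i) * fps_X ^ i) (\<Sum>i<m. 1) (real m)"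
    by (intro exp_majorant_sum) simp
  then have "exp_majorant ((fps_X - exp_diff_quot e) * (\<Sum>i<m. exp_diff_quot e ^ (m - Suc i) * fps_X ^ i))
      (e * real m) (1 + real m)"
    using exp_majorant_mult[OF exp_majorant_X_minus_exp_diff_quot[OF assms]] by simp
  then show ?thesis
    by (simp add: power_diff_sumr2 add.commute)
qed

definition poly_exp_approx :: "real \<Rightarrow> complex poly \<Rightarrow> complex fps" where
  "poly_exp_approx e p = (\<Sum>m\<le>degree p. fps_const (coeff p m) * exp_diff_quot e ^ m)"

lemma exp_majorant_poly_minus_poly_exp_approx:
  assumes "0 < e" "e \<le> 1"
  shows "exp_majorant (fps_of_poly p - poly_exp_approx e p)
    (e * real (degree p) * (\<Sum>m\<le>degree p. cmod (coeff p m))) (real (degree p) + 1)"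
proof -
  have "exp_majorant (fps_X ^ m - exp_diff_quot e ^ m) (e * real (degree p)) (real (degree p) + 1)"
    if "m \<le> degree p" for m
    using that assms
    by (intro exp_majorant_mono[OF exp_majorant_X_power_minus_exp_diff_quot_power[OF assms]])
      (auto intro: mult_left_mono)
  then have "exp_majorant (\<Sum>m\<le>degree p. fps_const (coeff p m) * (fps_X ^ m - exp_diff_quot e ^ m))
      (\<Sum>m\<le>degree p. cmod (coeff p m) * (e * real (degree p))) (real (degree p) + 1)"
    by (intro exp_majorant_sum exp_majorant_const_mult) simp
  moreover have "fps_of_poly p - poly_exp_approx e p
      = (\<Sum>m\<le>degree p. fps_const (coeff p m) * (fps_X ^ m - exp_diff_quot e ^ m))"
    by (subst fps_of_poly_as_sum_of_monoms)
      (simp add: poly_exp_approx_def right_diff_distrib sum_subtractf)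
  ultimately show ?thesis
    by (simp add: sum_distrib_left sum_distrib_right mult_ac)
qed

lemma exp_diff_quot_power:
  assumes "m \<le> d"
  shows "exp_diff_quot e ^ m = (\<Sum>j\<le>d. fps_const (complex_of_real (1 / e) ^ m * of_nat (m choose j)
    * (- 1) ^ (m - j)) * fps_exp (of_nat j * complex_of_real e))"
proof -
  define E where "E = fps_exp (complex_of_real e)"
  have "exp_diff_quot e ^ m = fps_const (complex_of_real (1 / e) ^ m) * (E + (- 1)) ^ m"
    by (simp add: exp_diff_quot_def E_def power_mult_distrib fps_const_power)
  also have "(E + (- 1)) ^ m = (\<Sum>j\<le>d. of_nat (m choose j) * E ^ j * (- 1) ^ (m - j))"
    unfolding binomial_ring using assms by (intro sum.mono_neutral_left) auto
  also have "fps_const (complex_of_real (1 / e) ^ m) * \<dots> = (\<Sum>j\<le>d. fps_const (complex_of_real (1 / e) ^ m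
      * of_nat (m choose j) * (- 1) ^ (m - j)) * fps_exp (of_nat j * complex_of_real e))"
    unfolding sum_distrib_left
  proof (intro sum.cong refl)
    fix j
    have "(- 1 :: complex fps) ^ (m - j) = fps_const ((- 1) ^ (m - j))"
      by (simp only: fps_const_1_eq_1[symmetric] fps_const_neg fps_const_power)
    moreover have "(of_nat (m choose j) :: complex fps) = fps_const (of_nat (m choose j))"
      by (simp add: fps_of_nat)
    moreover have "E ^ j = fps_exp (of_nat j * complex_of_real e)"
      unfolding E_def by (rule fps_exp_power_mult)
    ultimately show "fps_const (complex_of_real (1 / e) ^ m) * (of_nat (m choose j) * E ^ j * (- 1) ^ (m - j))
      = fps_const (complex_of_real (1 / e) ^ m * of_nat (m choose j) * (- 1) ^ (m - j))
        * fps_exp (of_nat j * complex_of_real e)"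
      by (simp only:) (simp add: mult_ac)
  qed
  finally show ?thesis .
qed

lemma fps_const_sum: "fps_const (\<Sum>i\<in>A. f i) = (\<Sum>i\<in>A. fps_const (f i))"
  by (induction A rule: infinite_finite_induct) (simp_all flip: fps_const_add)

lemma exp_combination_poly_exp_approx: "exp_combination (Suc (degree p)) (poly_exp_approx e p)"
proof -
  define g where "g m j = complex_of_real (1 / e) ^ m * of_nat (m choose j) * (- 1) ^ (m - j)" for m j
  have "poly_exp_approx e p = (\<Sum>m\<le>degree p. \<Sum>j\<le>degree p.
      fps_const (coeff p m * g m j) * fps_exp (of_nat j * complex_of_real e))"
    unfolding poly_exp_approx_def g_def
    by (intro sum.cong refl)
      (simp only: atMost_iff exp_diff_quot_power sum_distrib_left mult.assoc[symmetric] fps_const_mult)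
  also have "\<dots> = (\<Sum>j<Suc (degree p). fps_const (\<Sum>m\<le>degree p. coeff p m * g m j)
      * fps_exp (of_nat j * complex_of_real e))"
    by (subst sum.swap) (simp add: lessThan_Suc_atMost sum_distrib_right fps_const_sum)
  finally show ?thesis
    unfolding exp_combination_def by (intro exI)
qed

section \<open>Square-summable sequences\<close>

definition sq_summable :: "fvec \<Rightarrow> bool" where
  "sq_summable v \<longleftrightarrow> summable (\<lambda>n. (cmod (v n))\<^sup>2)"

lemma sq_norm_f_nonneg: "sq_summable v \<Longrightarrow> 0 \<le> sq_norm_f v"
  unfolding sq_summable_def sq_norm_f_def by (rule suminf_nonneg) auto

lemma sq_norm_f_pos: "sq_summable v \<Longrightarrow> v n \<noteq> 0 \<Longrightarrow> 0 < sq_norm_f v"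
  unfolding sq_summable_def sq_norm_f_def by (rule suminf_pos2[where i = n]) auto

lemma sq_summable_diff:
  assumes "sq_summable u" "sq_summable v"
  shows "sq_summable (\<lambda>n. u n - v n)"
proof -
  have bound: "(cmod (u n - v n))\<^sup>2 \<le> 2 * (cmod (u n))\<^sup>2 + 2 * (cmod (v n))\<^sup>2" for n
  proof -
    have "(cmod (u n - v n))\<^sup>2 \<le> (cmod (u n) + cmod (v n))\<^sup>2"
      by (intro power_mono norm_triangle_ineq4) simp
    moreover have "0 \<le> (cmod (u n) - cmod (v n))\<^sup>2"
      by simp
    ultimately show ?thesis
      by (simp add: power2_sum power2_diff)
  qed
  have "summable (\<lambda>n. 2 * (cmod (u n))\<^sup>2 + 2 * (cmod (v n))\<^sup>2)"
    using assms unfolding sq_summable_def by (intro summable_add summable_mult)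
  then show ?thesis
    unfolding sq_summable_def by (rule summable_comparison_test') (simp add: bound)
qed

lemma cauchy_schwarz_suminf:
  assumes "sq_summable u" "sq_summable v"
  shows "summable (\<lambda>n. cmod (u n) * cmod (v n))"
    and "(\<Sum>n. cmod (u n) * cmod (v n)) \<le> sqrt (sq_norm_f u) * sqrt (sq_norm_f v)"
proof -
  have partial: "(\<Sum>n<N. cmod (u n) * cmod (v n)) \<le> sqrt (sq_norm_f u) * sqrt (sq_norm_f v)" for N
  proof -
    have "(\<Sum>n<N. cmod (u n) * cmod (v n))
        \<le> L2_set (\<lambda>n. cmod (u n)) {..<N} * L2_set (\<lambda>n. cmod (v n)) {..<N}"
      using L2_set_mult_ineq[of "\<lambda>n. cmod (u n)" "\<lambda>n. cmod (v n)" "{..<N}"] by simp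
    also have "\<dots> \<le> sqrt (sq_norm_f u) * sqrt (sq_norm_f v)"
      using assms unfolding L2_set_def sq_norm_f_def sq_summable_def
      by (intro mult_mono real_sqrt_le_mono sum_le_suminf) (auto intro: suminf_nonneg sum_nonneg)
    finally show ?thesis .
  qed
  show "summable (\<lambda>n. cmod (u n) * cmod (v n))"
    by (rule summableI_nonneg_bounded[OF _ partial]) simp
  then show "(\<Sum>n. cmod (u n) * cmod (v n)) \<le> sqrt (sq_norm_f u) * sqrt (sq_norm_f v)"
    using partial by (rule suminf_le_const)
qed

lemma summable_inner_f:
  "sq_summable u \<Longrightarrow> sq_summable v \<Longrightarrow> summable (\<lambda>n. cnj (u n) * v n)"
  by (rule summable_norm_cancel) (simp add: norm_mult cauchy_schwarz_suminf)

lemma norm_inner_f_le: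
  assumes "sq_summable u" "sq_summable v"
  shows "cmod (inner_f u v) \<le> sqrt (sq_norm_f u) * sqrt (sq_norm_f v)"
proof -
  have "cmod (inner_f u v) \<le> (\<Sum>n. cmod (cnj (u n) * v n))"
    unfolding inner_f_def using assms
    by (intro summable_norm) (simp add: norm_mult cauchy_schwarz_suminf)
  also have "\<dots> \<le> sqrt (sq_norm_f u) * sqrt (sq_norm_f v)"
    using cauchy_schwarz_suminf[OF assms] by (simp add: norm_mult)
  finally show ?thesis .
qed

lemma inner_f_diff_right:
  assumes "sq_summable u" "sq_summable w"
  shows "inner_f u (\<lambda>n. u n - w n) = complex_of_real (sq_norm_f u) - inner_f u w"
proof -
  have "cnj (u n) * (u n - w n) = complex_of_real ((cmod (u n))\<^sup>2) - cnj (u n) * w n" for n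
    using complex_norm_square[of "u n"] by (simp add: right_diff_distrib mult.commute)
  moreover have "(\<lambda>n. complex_of_real ((cmod (u n))\<^sup>2) - cnj (u n) * w n)
      sums (complex_of_real (sq_norm_f u) - inner_f u w)"
    using assms summable_inner_f[OF assms] unfolding sq_summable_def sq_norm_f_def inner_f_def
    by (intro sums_diff sums_of_real summable_sums)
  ultimately show ?thesis
    unfolding inner_f_def[of u "\<lambda>n. u n - w n"] by (simp add: sums_iff)
qed

lemma sqrt_sq_norm_f_diff_le:
  assumes "sq_summable u" "sq_summable w"
  shows "sqrt (sq_norm_f (\<lambda>n. u n - w n)) \<le> sqrt (sq_norm_f u) + sqrt (sq_norm_f w)"
proof -
  define S where "S = (\<Sum>n. cmod (u n) * cmod (w n))"
  have le: "(cmod (u n - w n))\<^sup>2 \<le> (cmod (u n))\<^sup>2 + 2 * (cmod (u n) * cmod (w n)) + (cmod (w n))\<^sup>2" for n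
  proof -
    have "(cmod (u n - w n))\<^sup>2 \<le> (cmod (u n) + cmod (w n))\<^sup>2"
      by (intro power_mono norm_triangle_ineq4) simp
    then show ?thesis
      by (simp add: power2_sum)
  qed
  have sums: "(\<lambda>n. (cmod (u n))\<^sup>2 + 2 * (cmod (u n) * cmod (w n)) + (cmod (w n))\<^sup>2)
      sums (sq_norm_f u + 2 * S + sq_norm_f w)"
    using assms cauchy_schwarz_suminf(1)[OF assms] unfolding sq_summable_def sq_norm_f_def S_def
    by (intro sums_add sums_mult summable_sums)
  have "sq_norm_f (\<lambda>n. u n - w n) \<le> sq_norm_f u + 2 * S + sq_norm_f w"
    using sq_summable_diff[OF assms] sums unfolding sq_norm_f_def[of "\<lambda>n. u n - w n"] sq_summable_def
    by (intro sums_le[OF le summable_sums]) auto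
  also have "\<dots> \<le> (sqrt (sq_norm_f u) + sqrt (sq_norm_f w))\<^sup>2"
    using cauchy_schwarz_suminf(2)[OF assms] assms
    by (simp add: S_def power2_sum sq_norm_f_nonneg)
  finally show ?thesis
    by (simp add: real_le_lsqrt sq_norm_f_nonneg assms)
qed

lemma sq_norm_f_normalize_f:
  assumes "sq_summable v" "0 < sq_norm_f v"
  shows "sq_norm_f (normalize_f v) = 1"
proof -
  have "sq_norm_f (normalize_f v) = (\<Sum>n. (cmod (v n))\<^sup>2 / sq_norm_f v)"
    using assms(2) by (simp add: sq_norm_f_def normalize_f_def norm_divide power_divide)
  also have "\<dots> = sq_norm_f v / sq_norm_f v"
    using assms(1) unfolding sq_summable_def sq_norm_f_def by (rule suminf_divide)
  finally show ?thesis
    using assms(2) by simp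
qed

lemma inner_f_normalize_f:
  assumes "sq_summable u" "sq_summable v"
  shows "inner_f (normalize_f u) (normalize_f v)
    = inner_f u v / complex_of_real (sqrt (sq_norm_f u) * sqrt (sq_norm_f v))"
  using suminf_divide[OF summable_inner_f[OF assms]]
  by (simp add: inner_f_def normalize_f_def)

lemma exp_majorant_sq_norm_f:
  assumes "exp_majorant f a x"
  shows "sq_summable (fock_of_fps f)" "sq_norm_f (fock_of_fps f) \<le> a\<^sup>2 * exp (x\<^sup>2)"
proof -
  have le: "(cmod (fock_of_fps f n))\<^sup>2 \<le> a\<^sup>2 * ((x\<^sup>2) ^ n / fact n)" for n
  proof -
    have "(cmod (f $ n))\<^sup>2 \<le> (a * x ^ n / fact n)\<^sup>2"
      using assms unfolding exp_majorant_def by (intro power_mono) auto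
    then have "fact n * (cmod (f $ n))\<^sup>2 \<le> fact n * (a * x ^ n / fact n)\<^sup>2"
      by (intro mult_left_mono) auto
    also have "\<dots> = a\<^sup>2 * ((x\<^sup>2) ^ n / fact n)"
    proof -
      have "(x ^ n)\<^sup>2 = (x\<^sup>2) ^ n"
        by (metis power_mult mult.commute)
      then show ?thesis
        unfolding power_divide power_mult_distrib by (simp add: power2_eq_square)
    qed
    finally show ?thesis
      by (simp add: fock_of_fps_def norm_mult power_mult_distrib)
  qed
  have exp: "(\<lambda>n. a\<^sup>2 * ((x\<^sup>2) ^ n / fact n)) sums (a\<^sup>2 * exp (x\<^sup>2))"
    using exp_converges[of "x\<^sup>2"] by (intro sums_mult) (simp add: divide_inverse mult.commute)
  show "sq_summable (fock_of_fps f)"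
    unfolding sq_summable_def by (rule summable_comparison_test'[OF sums_summable[OF exp]]) (use le in simp)
  then show "sq_norm_f (fock_of_fps f) \<le> a\<^sup>2 * exp (x\<^sup>2)"
    unfolding sq_summable_def sq_norm_f_def by (intro sums_le[OF le summable_sums exp])
qed

lemma tendsto_sq_norm_f_fock_of_fps_zero:
  assumes "\<forall>\<^sub>F e in F. exp_majorant (f e) (g e) x" and "(g \<longlongrightarrow> 0) F"
  shows "((\<lambda>e. sq_norm_f (fock_of_fps (f e))) \<longlongrightarrow> 0) F"
proof (rule Lim_null_comparison)
  show "\<forall>\<^sub>F e in F. norm (sq_norm_f (fock_of_fps (f e))) \<le> (g e)\<^sup>2 * exp (x\<^sup>2)"
    using assms(1) by (rule eventually_mono) (simp add: exp_majorant_sq_norm_f sq_norm_f_nonneg)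
  show "((\<lambda>e. (g e)\<^sup>2 * exp (x\<^sup>2)) \<longlongrightarrow> 0) F"
    using assms(2) by (auto intro!: tendsto_eq_intros)
qed

lemma norm_inner_f_ge:
  assumes u: "sq_summable u" and v: "sq_summable v"
  shows "sqrt (sq_norm_f u) * (sqrt (sq_norm_f u) - sqrt (sq_norm_f (\<lambda>n. u n - v n)))
    \<le> cmod (inner_f u v)"
proof -
  define d where "d = (\<lambda>n. u n - v n)"
  have d: "sq_summable d"
    unfolding d_def by (rule sq_summable_diff[OF u v])
  have "inner_f u v = inner_f u (\<lambda>n. u n - d n)"
    by (simp add: d_def)
  also have "\<dots> = complex_of_real (sq_norm_f u) - inner_f u d"
    by (rule inner_f_diff_right[OF u d])
  finally have "sq_norm_f u - cmod (inner_f u d) \<le> cmod (inner_f u v)"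
    using norm_triangle_ineq2[of "complex_of_real (sq_norm_f u)" "inner_f u d"] sq_norm_f_nonneg[OF u]
    by simp
  moreover have "sq_norm_f u = sqrt (sq_norm_f u) * sqrt (sq_norm_f u)"
    using sq_norm_f_nonneg[OF u] by simp
  ultimately show ?thesis
    using norm_inner_f_le[OF u d] by (simp add: d_def right_diff_distrib)
qed

lemma overlap_normalize_f_ge:
  assumes u: "sq_summable u" and v: "sq_summable v"
    and a: "sq_norm_f u = a\<^sup>2" and s: "sq_norm_f (\<lambda>n. u n - v n) \<le> s\<^sup>2" "0 \<le> s" "s < a"
  shows "0 < sq_norm_f v"
    and "((a - s) / (a + s))\<^sup>2 \<le> (cmod (inner_f (normalize_f u) (normalize_f v)))\<^sup>2"
proof -
  have sqrt_u: "sqrt (sq_norm_f u) = a" and sqrt_d: "sqrt (sq_norm_f (\<lambda>n. u n - v n)) \<le> s"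
    using a s by (simp_all add: real_le_lsqrt)
  have "a * (a - s) \<le> a * (a - sqrt (sq_norm_f (\<lambda>n. u n - v n)))"
    using sqrt_d s by (intro mult_left_mono) auto
  with norm_inner_f_ge[OF u v] have lower: "a * (a - s) \<le> cmod (inner_f u v)"
    unfolding sqrt_u by linarith
  then have "a * (a - s) \<le> a * sqrt (sq_norm_f v)"
    using norm_inner_f_le[OF u v] sqrt_u by simp
  then have "a - s \<le> sqrt (sq_norm_f v)"
    using s by (simp add: mult_le_cancel_left_pos)
  then have v_sqrt_pos: "0 < sqrt (sq_norm_f v)"
    using s by linarith
  then show v_pos: "0 < sq_norm_f v"
    by simp
  have "v = (\<lambda>n. u n - (u n - v n))"
    by simp
  then have v_upper: "sqrt (sq_norm_f v) \<le> a + s"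
    using sqrt_sq_norm_f_diff_le[OF u sq_summable_diff[OF u v]] sqrt_u sqrt_d by simp
  have "(a - s) / (a + s) = a * (a - s) / (a * (a + s))"
    using s by simp
  also have "\<dots> \<le> cmod (inner_f u v) / (a * sqrt (sq_norm_f v))"
    using lower v_upper v_sqrt_pos s by (intro frac_le mult_left_mono) auto
  also have "\<dots> = cmod (inner_f (normalize_f u) (normalize_f v))"
    using v_pos s by (simp add: inner_f_normalize_f[OF u v] sqrt_u norm_divide norm_mult)
  finally show "((a - s) / (a + s))\<^sup>2 \<le> (cmod (inner_f (normalize_f u) (normalize_f v)))\<^sup>2"
    using s by (intro power_mono) auto
qed

lemma approx_coherent_rank_le_of_tendsto:
  assumes u: "sq_summable u" "0 < sq_norm_f u"
    and F: "F \<noteq> bot"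
    and \<phi>: "\<forall>\<^sub>F x in F. coherent_rank_le m (\<phi> x) \<and> sq_summable (\<phi> x)"
    and lim: "((\<lambda>x. sq_norm_f (\<lambda>n. u n - \<phi> x n)) \<longlongrightarrow> 0) F"
  shows "approx_coherent_rank_le m (normalize_f u)"
  unfolding approx_coherent_rank_le_def
proof (intro allI impI)
  fix \<delta> :: real
  assume "0 < \<delta>"
  define a where "a = sqrt (sq_norm_f u)"
  define s where "s x = sqrt (sq_norm_f (\<lambda>n. u n - \<phi> x n))" for x
  have "0 < a"
    using u by (simp add: a_def)
  have "(s \<longlongrightarrow> 0) F"
    unfolding s_def using tendsto_real_sqrt[OF lim] by simp
  then have "((\<lambda>x. ((a - s x) / (a + s x))\<^sup>2) \<longlongrightarrow> ((a - 0) / (a + 0))\<^sup>2) F"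
    using \<open>0 < a\<close> by (intro tendsto_intros) auto
  then have "\<forall>\<^sub>F x in F. 1 - \<delta> < ((a - s x) / (a + s x))\<^sup>2"
    using \<open>0 < a\<close> \<open>0 < \<delta>\<close> by (intro order_tendstoD(1)) auto
  moreover have "\<forall>\<^sub>F x in F. s x < a"
    using \<open>(s \<longlongrightarrow> 0) F\<close> \<open>0 < a\<close> by (rule order_tendstoD(2))
  ultimately obtain x where x: "coherent_rank_le m (\<phi> x)" "sq_summable (\<phi> x)"
    "1 - \<delta> < ((a - s x) / (a + s x))\<^sup>2" "s x < a"
    using eventually_happens'[OF F eventually_conj[OF \<phi> eventually_conj]] by blast
  have "sq_norm_f u = a\<^sup>2" "sq_norm_f (\<lambda>n. u n - \<phi> x n) \<le> (s x)\<^sup>2" "0 \<le> s x"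
    using u sq_norm_f_nonneg[OF sq_summable_diff[OF u(1) x(2)]] by (simp_all add: a_def s_def)
  note overlap = overlap_normalize_f_ge[OF u(1) x(2) this x(4)]
  show "\<exists>\<psi>. coherent_rank_le m \<psi> \<and> sq_norm_f \<psi> = 1 \<and> 1 - \<delta> < (cmod (inner_f (normalize_f u) \<psi>))\<^sup>2"
  proof (intro exI conjI)
    show "coherent_rank_le m (normalize_f (\<phi> x))"
      unfolding normalize_f_def by (rule coherent_rank_le_divide[OF x(1)])
    show "sq_norm_f (normalize_f (\<phi> x)) = 1"
      by (rule sq_norm_f_normalize_f[OF x(2) overlap(1)])
    show "1 - \<delta> < (cmod (inner_f (normalize_f u) (normalize_f (\<phi> x))))\<^sup>2"
      using x(3) overlap(2) by linarith
  qed
qed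

section \<open>Approximating states of bounded coherent rank\<close>

lemma coherent_rank_le_poly_exp_approx_mult:
  assumes "exp_combination k S"
  shows "coherent_rank_le (k * Suc (degree p)) (fock_of_fps (poly_exp_approx e p * S))"
  unfolding coherent_rank_le_iff_exp_combination
  using exp_combination_mult[OF exp_combination_poly_exp_approx assms] by (auto simp: mult.commute)

lemma approx_coherent_rank_le_poly_mult_exp_combination:
  assumes S: "exp_combination k S" and nonzero: "fps_of_poly p * S \<noteq> 0"
  shows "approx_coherent_rank_le (k * Suc (degree p)) (normalize_f (fock_of_fps (fps_of_poly p * S)))"
proof -
  obtain b y where S_majorant: "exp_majorant S b y"
    using exp_combination_imp_exp_majorant[OF S] .
  define C where "C = real (degree p) * (\<Sum>m\<le>degree p. cmod (coeff p m)) * b"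
  define u where "u = fock_of_fps (fps_of_poly p * S)"
  define D where "D e = (fps_of_poly p - poly_exp_approx e p) * S" for e
  define \<phi> where "\<phi> e = fock_of_fps (poly_exp_approx e p * S)" for e
  have u: "sq_summable u"
    unfolding u_def by (rule exp_majorant_sq_norm_f(1)[OF exp_majorant_mult[OF exp_majorant_poly S_majorant]])
  have u_phi: "(\<lambda>n. u n - \<phi> e n) = fock_of_fps (D e)" for e
    by (simp add: u_def \<phi>_def D_def fock_of_fps_diff algebra_simps)
  have "\<forall>\<^sub>F e in at_right 0. 0 < e \<and> e \<le> (1 :: real)"
    by (auto simp: eventually_at_right_field intro!: exI[of _ 1])
  then have D: "\<forall>\<^sub>F e in at_right 0. exp_majorant (D e) (e * C) (real (degree p) + 1 + y)"
    by (rule eventually_mono)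
      (use exp_majorant_mult[OF exp_majorant_poly_minus_poly_exp_approx S_majorant] in \<open>simp add: D_def C_def mult_ac\<close>)
  show ?thesis
    unfolding u_def[symmetric]
  proof (rule approx_coherent_rank_le_of_tendsto[where F = "at_right 0" and \<phi> = \<phi>])
    obtain n where "(fps_of_poly p * S) $ n \<noteq> 0"
      using nonzero fps_nonzero_nth by blast
    then show "0 < sq_norm_f u"
      using u by (intro sq_norm_f_pos[where n = n]) (simp_all add: u_def fock_of_fps_def)
    show "\<forall>\<^sub>F e in at_right 0. coherent_rank_le (k * Suc (degree p)) (\<phi> e) \<and> sq_summable (\<phi> e)"
      using D
    proof (rule eventually_mono, intro conjI)
      fix e
      assume "exp_majorant (D e) (e * C) (real (degree p) + 1 + y)"
      then have "sq_summable (\<lambda>n. u n - fock_of_fps (D e) n)"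
        by (intro sq_summable_diff u exp_majorant_sq_norm_f(1))
      moreover have "\<phi> e = (\<lambda>n. u n - fock_of_fps (D e) n)"
        by (simp flip: u_phi)
      ultimately show "sq_summable (\<phi> e)"
        by simp
      show "coherent_rank_le (k * Suc (degree p)) (\<phi> e)"
        unfolding \<phi>_def by (rule coherent_rank_le_poly_exp_approx_mult[OF S])
    qed
    show "((\<lambda>e. sq_norm_f (\<lambda>n. u n - \<phi> e n)) \<longlongrightarrow> 0) (at_right 0)"
      unfolding u_phi by (rule tendsto_sq_norm_f_fock_of_fps_zero[OF D]) (auto intro!: tendsto_eq_intros)
  qed (simp_all add: u)
qed

theorem proposition1:
  fixes bs :: "complex list" and z \<alpha> :: complex and k :: nat
  assumes "coherent_rank_le k (squeeze z (coh \<alpha>))"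
  shows "approx_coherent_rank_le (k * (length bs + 1))
           (normalize_f (foldr dad bs (squeeze z (coh \<alpha>))))"
proof -
  obtain S where S: "exp_combination k S" and G: "squeeze z (coh \<alpha>) = fock_of_fps S"
    using assms unfolding coherent_rank_le_iff_exp_combination by blast
  have "S \<noteq> 0"
    using squeeze_coh_vacuum_nonzero[of z \<alpha>] by (auto simp: G fock_of_fps_def)
  then have "fps_of_poly (dad_poly bs) * S \<noteq> 0"
    by (simp add: dad_poly_nonzero)
  then have "approx_coherent_rank_le (k * Suc (degree (dad_poly bs)))
      (normalize_f (foldr dad bs (squeeze z (coh \<alpha>))))"
    unfolding G foldr_dad_exp_combination[OF S]
    by (rule approx_coherent_rank_le_poly_mult_exp_combination[OF S])
  then show ?thesis
    by (rule approx_coherent_rank_le_mono) (use degree_dad_poly[of bs] in simp)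
qed

end
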